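(* Let $(\mathscr C,A,\psi)$ be an entwining structure. Then the category ${_A^{\mathscr C}}Ctr(\psi)$ of entwined contramodules over $(\mathscr C,A,\psi)$ has a set of generators.
   Context: $K$ is a field, $(U',U):=Hom_K(U',U)$. $\mathscr C$ is a coalgebra with several objects (objects $Ob(\mathscr C)$, vector spaces $\mathscr C(X,Y)$, coassociative counital maps $\delta_{XYZ}:\mathscr C(X,Z)\to\mathscr C(Y,Z)\otimes\mathscr C(X,Y)$, $\epsilon_X:\mathscr C(X,X)\to K$). $A$ is a $K$-algebra and $\psi=\{\psi_{XY}:\mathscr C(X,Y)\otimes A\to A\otimes\mathscr C(X,Y)\}$, $\psi(f\otimes a)=a_\psi\otimes f^\psi$, is an entwining: $a_\psi\otimes\delta_{XYZ}(f^\psi)=a_{\psi\psi}\otimes f_{Y1}^\psi\otimes f_{Y2}^\psi$, $(ab)_\psi\otimes f^\psi=a_\psi b_\psi\otimes f^{\psi\psi}$, $\psi(f\otimes1)=1\otimes f$, $a_\psi\epsilon_Z(g^\psi)=\epsilon_Z(g)a$. An entwined contramodule is a family of vector spaces $\mathcal M(X)$ with contramodule maps $\pi_{XY}:(\mathscr C(X,Y),\mathcal M(Y))\to\mathcal M(X)$ (satisfying $\pi_{XZ}\circ(\delta_{XYZ},\mathcal M(Z))=\pi_{XY}\circ(\mathscr C(X,Y),\pi_{YZ})$ and $\pi_{XX}\circ(\epsilon_X,\mathcal M(X))=id$) and left $A$-module structures $\mu_X:\mathcal M(X)\to(A,\mathcal M(X))$ with $\mu_X\circ\pi_{XY}=(A,\pi_{XY})\circ(\psi_{XY},\mathcal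 M(Y))\circ(\mathscr C(X,Y),\mu_Y)$ (via hom-tensor identifications); morphisms are objectwise $A$-linear maps compatible with the $\pi$'s. This category is ${_A^{\mathscr C}}Ctr(\psi)$. *)

theory Defs
  imports "HOL-Library.FuncSet" "HOL-Library.Function_Algebras"
begin

text \<open>
Objects of the several-object coalgebra are the elements of the type 'x.
Each Hom-space C(X,Y) is the K-vector space with basis B X Y (a subset of 'b),
i.e. finitely supported functions on B X Y.  Tensor products of such spaces
have the product bases.  Hence
  delta_XYZ : C(X,Z) -> C(Y,Z) (x) C(X,Y)  is given by  dlt X Y Z s (p,q),
     the coefficient of e_p (x) e_q in delta(e_s);
  eps_X : C(X,X) -> K  is given by  eps X s = eps_X(e_s);
  psi_XY : C(X,Y) (x) A -> A (x) C(X,Y)  is given by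
     psi(e_s (x) a) = sum_u (psi X Y s a u) (x) e_u.
A linear map C(X,Y) -> V is the same as a function B X Y -> V, so
Hom_K(C(X,Y), M(Y)) is  B X Y ->E carrier(M Y).
The K-algebra A is the type 'a (a ring with unit) with scalar multiplication sA.
\<close>

definition k_algebra :: "('k::field \<Rightarrow> 'a::ring_1 \<Rightarrow> 'a) \<Rightarrow> bool" where
  "k_algebra sA \<longleftrightarrow>
     (\<forall>k l a. sA k (sA l a) = sA (k * l) a) \<and> (\<forall>a. sA 1 a = a)
   \<and> (\<forall>k l a. sA (k + l) a = sA k a + sA l a)
   \<and> (\<forall>k a b. sA k (a + b) = sA k a + sA k b)
   \<and> (\<forall>k a b. sA k (a * b) = sA k a * b)
   \<and> (\<forall>k a b. sA k (a * b) = a * sA k b)"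

definition coalgebra_so ::
  "('x \<Rightarrow> 'x \<Rightarrow> 'b set) \<Rightarrow> ('x \<Rightarrow> 'x \<Rightarrow> 'x \<Rightarrow> 'b \<Rightarrow> 'b \<times> 'b \<Rightarrow> 'k::field)
   \<Rightarrow> ('x \<Rightarrow> 'b \<Rightarrow> 'k) \<Rightarrow> bool" where
  "coalgebra_so B dlt eps \<longleftrightarrow>
     (\<forall>X Y Z s. s \<in> B X Z \<longrightarrow>
        finite {pq. dlt X Y Z s pq \<noteq> 0} \<and> {pq. dlt X Y Z s pq \<noteq> 0} \<subseteq> B Y Z \<times> B X Y)
   \<and> (\<forall>W X Y Z b p q r. b \<in> B W Z \<longrightarrow> p \<in> B Y Z \<longrightarrow> q \<in> B X Y \<longrightarrow> r \<in> B W X \<longrightarrow>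
        (\<Sum>s\<in>{s \<in> B X Z. dlt W X Z b (s, r) \<noteq> 0}. dlt W X Z b (s, r) * dlt X Y Z s (p, q))
      = (\<Sum>t\<in>{t \<in> B W Y. dlt W Y Z b (p, t) \<noteq> 0}. dlt W Y Z b (p, t) * dlt W X Y t (q, r)))
   \<and> (\<forall>X Y b q. b \<in> B X Y \<longrightarrow> q \<in> B X Y \<longrightarrow>
        (\<Sum>p\<in>{p \<in> B Y Y. dlt X Y Y b (p, q) \<noteq> 0}. eps Y p * dlt X Y Y b (p, q))
      = (if q = b then 1 else 0))
   \<and> (\<forall>X Y b p. b \<in> B X Y \<longrightarrow> p \<in> B X Y \<longrightarrow>
        (\<Sum>r\<in>{r \<in> B X X. dlt X X Y b (p, r) \<noteq> 0}. eps X r * dlt X X Y b (p, r))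
      = (if p = b then 1 else 0))"

definition entwining ::
  "('x \<Rightarrow> 'x \<Rightarrow> 'b set) \<Rightarrow> ('x \<Rightarrow> 'x \<Rightarrow> 'x \<Rightarrow> 'b \<Rightarrow> 'b \<times> 'b \<Rightarrow> 'k::field)
   \<Rightarrow> ('x \<Rightarrow> 'b \<Rightarrow> 'k) \<Rightarrow> ('k \<Rightarrow> 'a::ring_1 \<Rightarrow> 'a)
   \<Rightarrow> ('x \<Rightarrow> 'x \<Rightarrow> 'b \<Rightarrow> 'a \<Rightarrow> 'b \<Rightarrow> 'a) \<Rightarrow> bool" where
  "entwining B dlt eps sA psi \<longleftrightarrow>
     (\<forall>X Y s a. s \<in> B X Y \<longrightarrow>
        finite {u. psi X Y s a u \<noteq> 0} \<and> {u. psi X Y s a u \<noteq> 0} \<subseteq> B X Y)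
   \<and> (\<forall>X Y s a b. s \<in> B X Y \<longrightarrow> psi X Y s (a + b) = (\<lambda>u. psi X Y s a u + psi X Y s b u))
   \<and> (\<forall>X Y s k a. s \<in> B X Y \<longrightarrow> psi X Y s (sA k a) = (\<lambda>u. sA k (psi X Y s a u)))
   \<and> (\<forall>X Y Z s a p q. s \<in> B X Z \<longrightarrow> p \<in> B Y Z \<longrightarrow> q \<in> B X Y \<longrightarrow>
        (\<Sum>u\<in>{u \<in> B X Z. psi X Z s a u \<noteq> 0}. sA (dlt X Y Z u (p, q)) (psi X Z s a u))
      = (\<Sum>pq\<in>{pq \<in> B Y Z \<times> B X Y. dlt X Y Z s pq \<noteq> 0}.
           psi Y Z (fst pq) (sA (dlt X Y Z s pq) (psi X Y (snd pq) a q)) p))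
   \<and> (\<forall>X Y s a b u. s \<in> B X Y \<longrightarrow>
        psi X Y s (a * b) u = (\<Sum>v\<in>{v \<in> B X Y. psi X Y s a v \<noteq> 0}. psi X Y s a v * psi X Y v b u))
   \<and> (\<forall>X Y s. s \<in> B X Y \<longrightarrow> psi X Y s 1 = (\<lambda>u. if u = s then 1 else 0))
   \<and> (\<forall>Z s a. s \<in> B Z Z \<longrightarrow>
        (\<Sum>u\<in>{u \<in> B Z Z. psi Z Z s a u \<noteq> 0}. sA (eps Z u) (psi Z Z s a u)) = sA (eps Z s) a)"

text \<open>Data of an entwined contramodule: carriers M(X) (subgroups of an ambient
abelian group 'm), left A-actions, and contramodule maps pi_XY.\<close>
record ('x, 'm, 'a, 'b) ectr =
  ecar :: "'x \<Rightarrow> 'm set"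
  eact :: "'x \<Rightarrow> 'a \<Rightarrow> 'm \<Rightarrow> 'm"
  epi  :: "'x \<Rightarrow> 'x \<Rightarrow> ('b \<Rightarrow> 'm) \<Rightarrow> 'm"

text \<open>The K-vector space structure of M(X) is the one induced by the A-action
(K-linearity of mu_X forces k m = (k 1_A) m).\<close>
definition kact :: "('k \<Rightarrow> 'a::ring_1 \<Rightarrow> 'a) \<Rightarrow> ('x, 'm, 'a, 'b) ectr \<Rightarrow> 'x \<Rightarrow> 'k \<Rightarrow> 'm \<Rightarrow> 'm" where
  "kact sA M X k m = eact M X (sA k 1) m"

definition entw_ctr ::
  "('x \<Rightarrow> 'x \<Rightarrow> 'b set) \<Rightarrow> ('x \<Rightarrow> 'x \<Rightarrow> 'x \<Rightarrow> 'b \<Rightarrow> 'b \<times> 'b \<Rightarrow> 'k::field)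
   \<Rightarrow> ('x \<Rightarrow> 'b \<Rightarrow> 'k) \<Rightarrow> ('k \<Rightarrow> 'a::ring_1 \<Rightarrow> 'a)
   \<Rightarrow> ('x \<Rightarrow> 'x \<Rightarrow> 'b \<Rightarrow> 'a \<Rightarrow> 'b \<Rightarrow> 'a) \<Rightarrow> ('x, 'm::ab_group_add, 'a, 'b) ectr \<Rightarrow> bool" where
  "entw_ctr B dlt eps sA psi M \<longleftrightarrow>
     \<comment> \<open>each M(X) is an additive subgroup, closed under the A-action\<close>
     (\<forall>X. 0 \<in> ecar M X \<and> (\<forall>m\<in>ecar M X. \<forall>n\<in>ecar M X. m + n \<in> ecar M X)
          \<and> (\<forall>m\<in>ecar M X. - m \<in> ecar M X))
   \<and> (\<forall>X a m. m \<in> ecar M X \<longrightarrow> eact M X a m \<in> ecar M X)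
     \<comment> \<open>left A-module axioms\<close>
   \<and> (\<forall>X m. m \<in> ecar M X \<longrightarrow> eact M X 1 m = m)
   \<and> (\<forall>X a b m. m \<in> ecar M X \<longrightarrow> eact M X (a * b) m = eact M X a (eact M X b m))
   \<and> (\<forall>X a b m. m \<in> ecar M X \<longrightarrow> eact M X (a + b) m = eact M X a m + eact M X b m)
   \<and> (\<forall>X a m n. m \<in> ecar M X \<longrightarrow> n \<in> ecar M X \<longrightarrow>
        eact M X a (m + n) = eact M X a m + eact M X a n)
     \<comment> \<open>pi_XY : Hom(C(X,Y), M(Y)) -> M(X) is a K-linear map\<close>
   \<and> (\<forall>X Y \<phi>. \<phi> \<in> B X Y \<rightarrow>\<^sub>E ecar M Y \<longrightarrow> epi M X Y \<phi> \<in> ecar M X)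
   \<and> (\<forall>X Y \<phi> \<phi>'. \<phi> \<in> B X Y \<rightarrow>\<^sub>E ecar M Y \<longrightarrow> \<phi>' \<in> B X Y \<rightarrow>\<^sub>E ecar M Y \<longrightarrow>
        epi M X Y (\<lambda>s\<in>B X Y. \<phi> s + \<phi>' s) = epi M X Y \<phi> + epi M X Y \<phi>')
   \<and> (\<forall>X Y \<phi> k. \<phi> \<in> B X Y \<rightarrow>\<^sub>E ecar M Y \<longrightarrow>
        epi M X Y (\<lambda>s\<in>B X Y. kact sA M Y k (\<phi> s)) = kact sA M X k (epi M X Y \<phi>))
     \<comment> \<open>contraassociativity: pi_XZ o (delta_XYZ, M(Z)) = pi_XY o (C(X,Y), pi_YZ)\<close>
   \<and> (\<forall>X Y Z \<Phi>. \<Phi> \<in> (B Y Z \<times> B X Y) \<rightarrow>\<^sub>E ecar M Z \<longrightarrow>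
        epi M X Z (\<lambda>s\<in>B X Z. \<Sum>pq\<in>{pq \<in> B Y Z \<times> B X Y. dlt X Y Z s pq \<noteq> 0}.
                                  kact sA M Z (dlt X Y Z s pq) (\<Phi> pq))
      = epi M X Y (\<lambda>q\<in>B X Y. epi M Y Z (\<lambda>p\<in>B Y Z. \<Phi> (p, q))))
     \<comment> \<open>counitality: pi_XX o (eps_X, M(X)) = id\<close>
   \<and> (\<forall>X m. m \<in> ecar M X \<longrightarrow> epi M X X (\<lambda>s\<in>B X X. kact sA M X (eps X s) m) = m)
     \<comment> \<open>entwined compatibility:
         mu_X o pi_XY = (A, pi_XY) o (psi_XY, M(Y)) o (C(X,Y), mu_Y)\<close>
   \<and> (\<forall>X Y a \<phi>. \<phi> \<in> B X Y \<rightarrow>\<^sub>E ecar M Y \<longrightarrow>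
        eact M X a (epi M X Y \<phi>)
      = epi M X Y (\<lambda>s\<in>B X Y. \<Sum>u\<in>{u \<in> B X Y. psi X Y s a u \<noteq> 0}. eact M Y (psi X Y s a u) (\<phi> u)))"

definition ectr_hom ::
  "('x \<Rightarrow> 'x \<Rightarrow> 'b set) \<Rightarrow> ('x, 'm::ab_group_add, 'a, 'b) ectr
   \<Rightarrow> ('x, 'n::ab_group_add, 'a, 'b) ectr \<Rightarrow> ('x \<Rightarrow> 'm \<Rightarrow> 'n) \<Rightarrow> bool" where
  "ectr_hom B M N F \<longleftrightarrow>
     (\<forall>X m. m \<in> ecar M X \<longrightarrow> F X m \<in> ecar N X)
   \<and> (\<forall>X m n. m \<in> ecar M X \<longrightarrow> n \<in> ecar M X \<longrightarrow> F X (m + n) = F X m + F X n)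
   \<and> (\<forall>X a m. m \<in> ecar M X \<longrightarrow> F X (eact M X a m) = eact N X a (F X m))
   \<and> (\<forall>X Y \<phi>. \<phi> \<in> B X Y \<rightarrow>\<^sub>E ecar M Y \<longrightarrow>
        F X (epi M X Y \<phi>) = epi N X Y (\<lambda>s\<in>B X Y. F Y (\<phi> s)))"

definition hom_eq :: "('x, 'm, 'a, 'b) ectr \<Rightarrow> ('x \<Rightarrow> 'm \<Rightarrow> 'n) \<Rightarrow> ('x \<Rightarrow> 'm \<Rightarrow> 'n) \<Rightarrow> bool" where
  "hom_eq M F G \<longleftrightarrow> (\<forall>X. \<forall>m\<in>ecar M X. F X m = G X m)"

end

theory Submission
  imports Defs
begin

(* For each object W, Hom_K(C(-,W), A) is an entwined contramodule: A acts through psi and the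
   contraaction is dual to the comultiplication.  Given an entwined contramodule M and m in M(W),
   the maps f |-> pi_XW(s |-> f(s) m) form a morphism from it to M, and by counitality of pi this
   morphism sends the counit element eps(-) 1 of Hom_K(C(W,W), A) to m.  So two morphisms M -> N
   that differ at some m in M(W) still differ after composition with it, and these contramodules,
   one per object W, form a set of generators.
   Each axiom of Hom_K(C(-,W), A) reduces, at a basis element, to the corresponding coalgebra or
   entwining axiom once all sums over supports, which live in possibly infinite bases, are
   rewritten as sums over one common finite set of basis elements. *)

lemma sum_fun_apply: "(sum f A) x = (\<Sum>a\<in>A. f a x)"
  by (induction A rule: infinite_finite_induct) auto

lemma sum_nonzero_eq_sum_superset:
  assumes "finite T" "{x \<in> S. g x \<noteq> 0} \<subseteq> T"
    and "\<And>x. x \<in> T \<Longrightarrow> x \<notin> S \<or> g x = 0 \<Longrightarrow> h x = 0"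
  shows "(\<Sum>x\<in>{x \<in> S. g x \<noteq> 0}. h x) = (\<Sum>x\<in>T. h x)"
  by (rule sum.mono_neutral_left) (use assms in auto)

lemma sum_swap_4:
  "(\<Sum>a\<in>A. \<Sum>b\<in>B. \<Sum>c\<in>C. \<Sum>d\<in>D. f a b c d) = (\<Sum>c\<in>C. \<Sum>d\<in>D. \<Sum>a\<in>A. \<Sum>b\<in>B. f a b c d)"
proof -
  have "(\<Sum>a\<in>A. \<Sum>b\<in>B. \<Sum>c\<in>C. \<Sum>d\<in>D. f a b c d) = (\<Sum>a\<in>A. \<Sum>c\<in>C. \<Sum>b\<in>B. \<Sum>d\<in>D. f a b c d)"
    by (intro sum.cong refl sum.swap)
  also have "\<dots> = (\<Sum>c\<in>C. \<Sum>a\<in>A. \<Sum>d\<in>D. \<Sum>b\<in>B. f a b c d)"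
    by (subst sum.swap) (intro sum.cong refl sum.swap)
  also have "\<dots> = (\<Sum>c\<in>C. \<Sum>d\<in>D. \<Sum>a\<in>A. \<Sum>b\<in>B. f a b c d)"
    by (intro sum.cong refl sum.swap)
  finally show ?thesis .
qed

context
  fixes B :: "'x \<Rightarrow> 'x \<Rightarrow> 'b set"
    and dlt :: "'x \<Rightarrow> 'x \<Rightarrow> 'x \<Rightarrow> 'b \<Rightarrow> 'b \<times> 'b \<Rightarrow> 'k::field"
    and eps :: "'x \<Rightarrow> 'b \<Rightarrow> 'k"
    and sA :: "'k \<Rightarrow> 'a::ring_1 \<Rightarrow> 'a"
    and psi :: "'x \<Rightarrow> 'x \<Rightarrow> 'b \<Rightarrow> 'a \<Rightarrow> 'b \<Rightarrow> 'a"
    and M :: "('x, 'm::ab_group_add, 'a, 'b) ectr"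
  assumes M: "entw_ctr B dlt eps sA psi M"
begin

lemma entw_ctr_act_closed: "m \<in> ecar M X \<Longrightarrow> eact M X a m \<in> ecar M X"
  using M unfolding entw_ctr_def by meson

lemma entw_ctr_act_mult: "m \<in> ecar M X \<Longrightarrow> eact M X (a * b) m = eact M X a (eact M X b m)"
  using M unfolding entw_ctr_def by meson

lemma entw_ctr_act_add_left: "m \<in> ecar M X \<Longrightarrow> eact M X (a + b) m = eact M X a m + eact M X b m"
  using M unfolding entw_ctr_def by meson

lemma entw_ctr_pi_closed: "\<phi> \<in> B X Y \<rightarrow>\<^sub>E ecar M Y \<Longrightarrow> epi M X Y \<phi> \<in> ecar M X"
  using M unfolding entw_ctr_def by meson

lemma entw_ctr_pi_add:
  "\<phi> \<in> B X Y \<rightarrow>\<^sub>E ecar M Y \<Longrightarrow> \<phi>' \<in> B X Y \<rightarrow>\<^sub>E ecar M Y \<Longrightarrow>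
    epi M X Y (\<lambda>s\<in>B X Y. \<phi> s + \<phi>' s) = epi M X Y \<phi> + epi M X Y \<phi>'"
  using M unfolding entw_ctr_def by meson

lemma entw_ctr_pi_assoc:
  "\<Phi> \<in> (B Y Z \<times> B X Y) \<rightarrow>\<^sub>E ecar M Z \<Longrightarrow>
    epi M X Z (\<lambda>s\<in>B X Z. \<Sum>pq\<in>{pq \<in> B Y Z \<times> B X Y. dlt X Y Z s pq \<noteq> 0}. kact sA M Z (dlt X Y Z s pq) (\<Phi> pq))
  = epi M X Y (\<lambda>q\<in>B X Y. epi M Y Z (\<lambda>p\<in>B Y Z. \<Phi> (p, q)))"
  using M unfolding entw_ctr_def by meson

lemma entw_ctr_pi_counit: "m \<in> ecar M X \<Longrightarrow> epi M X X (\<lambda>s\<in>B X X. kact sA M X (eps X s) m) = m"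
  using M unfolding entw_ctr_def by meson

lemma entw_ctr_act_pi:
  "\<phi> \<in> B X Y \<rightarrow>\<^sub>E ecar M Y \<Longrightarrow>
    eact M X a (epi M X Y \<phi>)
  = epi M X Y (\<lambda>s\<in>B X Y. \<Sum>u\<in>{u \<in> B X Y. psi X Y s a u \<noteq> 0}. eact M Y (psi X Y s a u) (\<phi> u))"
  using M unfolding entw_ctr_def by meson

lemma entw_ctr_act_zero: "m \<in> ecar M X \<Longrightarrow> eact M X 0 m = 0"
  using entw_ctr_act_add_left[of m X 0 0] by simp

lemma entw_ctr_act_sum: "m \<in> ecar M X \<Longrightarrow> eact M X (sum g A) m = (\<Sum>x\<in>A. eact M X (g x) m)"
  by (induction A rule: infinite_finite_induct) (simp_all add: entw_ctr_act_zero entw_ctr_act_add_left)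

end

locale algebra_over_field =
  fixes sA :: "'k::field \<Rightarrow> 'a::ring_1 \<Rightarrow> 'a"
  assumes k_algebra: "k_algebra sA"
begin

lemma sA_sA: "sA k (sA l a) = sA (k * l) a"
  using k_algebra unfolding k_algebra_def by blast

lemma sA_one: "sA 1 a = a"
  using k_algebra unfolding k_algebra_def by blast

lemma sA_add_left: "sA (k + l) a = sA k a + sA l a"
  using k_algebra unfolding k_algebra_def by blast

lemma sA_add_right: "sA k (a + b) = sA k a + sA k b"
  using k_algebra unfolding k_algebra_def by blast

lemma sA_mult_left: "sA k (a * b) = sA k a * b"
  using k_algebra unfolding k_algebra_def by blast

lemma sA_mult_right: "sA k (a * b) = a * sA k b"
  using k_algebra unfolding k_algebra_def by blast

lemma sA_zero_left [simp]: "sA 0 a = 0"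
  using sA_add_left[of 0 0 a] by simp

lemma sA_zero_right [simp]: "sA k 0 = 0"
  using sA_add_right[of k 0 0] by simp

lemma sA_sum_right: "sA k (sum f A) = (\<Sum>x\<in>A. sA k (f x))"
  by (induction A rule: infinite_finite_induct) (simp_all add: sA_add_right)

lemma sA_sum_left: "sA (sum f A) a = (\<Sum>x\<in>A. sA (f x) a)"
  by (induction A rule: infinite_finite_induct) (simp_all add: sA_add_left)

lemma sA_one_mult: "sA k 1 * a = sA k a"
  using sA_mult_left[of k 1 a] by simp

lemma mult_sA_commute: "a * sA k b = sA k a * b"
  by (metis sA_mult_left sA_mult_right)

lemma sA_left_commute: "sA k (sA l a) = sA l (sA k a)"
  by (simp add: sA_sA mult.commute)

lemma entw_ctr_act_sA:
  "entw_ctr B dlt eps sA psi M \<Longrightarrow> m \<in> ecar M X \<Longrightarrow> eact M X (sA k a) m = kact sA M X k (eact M X a m)"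
  unfolding kact_def by (simp add: entw_ctr_act_mult[symmetric] sA_one_mult)

end

locale coalgebra_several_objects =
  fixes B :: "'x \<Rightarrow> 'x \<Rightarrow> 'b set"
    and dlt :: "'x \<Rightarrow> 'x \<Rightarrow> 'x \<Rightarrow> 'b \<Rightarrow> 'b \<times> 'b \<Rightarrow> 'k::field"
    and eps :: "'x \<Rightarrow> 'b \<Rightarrow> 'k"
  assumes coalgebra: "coalgebra_so B dlt eps"
begin

lemma dlt_finite_support: "s \<in> B X Z \<Longrightarrow> finite {pq. dlt X Y Z s pq \<noteq> 0}"
  using coalgebra unfolding coalgebra_so_def by blast

lemma dlt_support: "s \<in> B X Z \<Longrightarrow> dlt X Y Z s pq \<noteq> 0 \<Longrightarrow> pq \<in> B Y Z \<times> B X Y"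
  using coalgebra[unfolded coalgebra_so_def, THEN conjunct1] by blast

lemma dlt_outside_zero: "s \<in> B X Z \<Longrightarrow> pq \<notin> B Y Z \<times> B X Y \<Longrightarrow> dlt X Y Z s pq = 0"
  using dlt_support by blast

lemma coassoc_on:
  assumes b: "b \<in> B W Z"
    and S: "finite S" "\<And>s. dlt W X Z b (s, r) \<noteq> 0 \<Longrightarrow> s \<in> S"
    and T: "finite T" "\<And>t. dlt W Y Z b (p, t) \<noteq> 0 \<Longrightarrow> t \<in> T"
  shows "(\<Sum>s\<in>S. dlt W X Z b (s, r) * dlt X Y Z s (p, q))
       = (\<Sum>t\<in>T. dlt W Y Z b (p, t) * dlt W X Y t (q, r))"
proof (cases "p \<in> B Y Z \<and> q \<in> B X Y \<and> r \<in> B W X")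
  case True
  have "(\<Sum>s\<in>{s \<in> B X Z. dlt W X Z b (s, r) \<noteq> 0}. dlt W X Z b (s, r) * dlt X Y Z s (p, q))
      = (\<Sum>t\<in>{t \<in> B W Y. dlt W Y Z b (p, t) \<noteq> 0}. dlt W Y Z b (p, t) * dlt W X Y t (q, r))"
    using coalgebra b True unfolding coalgebra_so_def by blast
  moreover have "(\<Sum>s\<in>{s \<in> B X Z. dlt W X Z b (s, r) \<noteq> 0}. dlt W X Z b (s, r) * dlt X Y Z s (p, q))
      = (\<Sum>s\<in>S. dlt W X Z b (s, r) * dlt X Y Z s (p, q))"
    by (rule sum_nonzero_eq_sum_superset) (use S in \<open>auto simp: dlt_outside_zero[OF b]\<close>)
  moreover have "(\<Sum>t\<in>{t \<in> B W Y. dlt W Y Z b (p, t) \<noteq> 0}. dlt W Y Z b (p, t) * dlt W X Y t (q, r))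
      = (\<Sum>t\<in>T. dlt W Y Z b (p, t) * dlt W X Y t (q, r))"
    by (rule sum_nonzero_eq_sum_superset) (use T in \<open>auto simp: dlt_outside_zero[OF b]\<close>)
  ultimately show ?thesis by simp
next
  case False
  have lhs_zero: "dlt W X Z b (s, r) * dlt X Y Z s (p, q) = 0" for s
  proof (cases "dlt W X Z b (s, r) = 0")
    case False
    then have "s \<in> B X Z" "r \<in> B W X" using dlt_support[OF b] by auto
    then show ?thesis using \<open>\<not> (p \<in> B Y Z \<and> q \<in> B X Y \<and> r \<in> B W X)\<close>
      by (simp add: dlt_outside_zero)
  qed simp
  have rhs_zero: "dlt W Y Z b (p, t) * dlt W X Y t (q, r) = 0" for t
  proof (cases "dlt W Y Z b (p, t) = 0")
    case False
    then have "p \<in> B Y Z" "t \<in> B W Y" using dlt_support[OF b] by auto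
    then show ?thesis using \<open>\<not> (p \<in> B Y Z \<and> q \<in> B X Y \<and> r \<in> B W X)\<close>
      by (simp add: dlt_outside_zero)
  qed simp
  show ?thesis by (simp only: lhs_zero rhs_zero sum.neutral_const)
qed

lemma counit_snd_on:
  assumes b: "b \<in> B X Y" and p: "p \<in> B X Y"
    and S: "finite S" "\<And>r. dlt X X Y b (p, r) \<noteq> 0 \<Longrightarrow> r \<in> S"
  shows "(\<Sum>r\<in>S. eps X r * dlt X X Y b (p, r)) = (if p = b then 1 else 0)"
proof -
  have "(\<Sum>r\<in>{r \<in> B X X. dlt X X Y b (p, r) \<noteq> 0}. eps X r * dlt X X Y b (p, r))
      = (if p = b then 1 else 0)"
    using coalgebra b p unfolding coalgebra_so_def by blast
  moreover have "(\<Sum>r\<in>{r \<in> B X X. dlt X X Y b (p, r) \<noteq> 0}. eps X r * dlt X X Y b (p, r))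
      = (\<Sum>r\<in>S. eps X r * dlt X X Y b (p, r))"
    by (rule sum_nonzero_eq_sum_superset) (use S in \<open>auto simp: dlt_outside_zero[OF b]\<close>)
  ultimately show ?thesis by simp
qed

end

locale entwining_structure = algebra_over_field sA + coalgebra_several_objects B dlt eps
  for B :: "'x \<Rightarrow> 'x \<Rightarrow> 'b set"
    and dlt :: "'x \<Rightarrow> 'x \<Rightarrow> 'x \<Rightarrow> 'b \<Rightarrow> 'b \<times> 'b \<Rightarrow> 'k::field"
    and eps :: "'x \<Rightarrow> 'b \<Rightarrow> 'k"
    and sA :: "'k \<Rightarrow> 'a::ring_1 \<Rightarrow> 'a" +
  fixes psi :: "'x \<Rightarrow> 'x \<Rightarrow> 'b \<Rightarrow> 'a \<Rightarrow> 'b \<Rightarrow> 'a"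
  assumes entwining: "entwining B dlt eps sA psi"
begin

lemma psi_finite_support: "s \<in> B X Y \<Longrightarrow> finite {u. psi X Y s a u \<noteq> 0}"
  using entwining[unfolded entwining_def, THEN conjunct1] by blast

lemma psi_support: "s \<in> B X Y \<Longrightarrow> psi X Y s a u \<noteq> 0 \<Longrightarrow> u \<in> B X Y"
  using entwining[unfolded entwining_def, THEN conjunct1] by blast

lemma psi_outside_zero: "s \<in> B X Y \<Longrightarrow> u \<notin> B X Y \<Longrightarrow> psi X Y s a u = 0"
  using psi_support by blast

lemma psi_add: "s \<in> B X Y \<Longrightarrow> psi X Y s (a + b) u = psi X Y s a u + psi X Y s b u"
  using entwining[unfolded entwining_def, THEN conjunct2, THEN conjunct1] by simp

lemma psi_sA: "s \<in> B X Y \<Longrightarrow> psi X Y s (sA k a) u = sA k (psi X Y s a u)"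
  using entwining[unfolded entwining_def, THEN conjunct2, THEN conjunct2, THEN conjunct1] by simp

lemma psi_one: "s \<in> B X Y \<Longrightarrow> psi X Y s 1 u = (if u = s then 1 else 0)"
proof -
  assume "s \<in> B X Y"
  moreover have "\<forall>X Y s. s \<in> B X Y \<longrightarrow> psi X Y s 1 = (\<lambda>u. if u = s then 1 else 0)"
    using entwining unfolding entwining_def by blast
  ultimately show ?thesis by simp
qed

lemma psi_zero [simp]: "s \<in> B X Y \<Longrightarrow> psi X Y s 0 u = 0"
  using psi_add[of s X Y 0 0 u] by simp

lemma psi_mult_on:
  assumes s: "s \<in> B X Y" and V: "finite V" "\<And>v. psi X Y s a v \<noteq> 0 \<Longrightarrow> v \<in> V"
  shows "psi X Y s (a * b) u = (\<Sum>v\<in>V. psi X Y s a v * psi X Y v b u)"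
proof -
  have "psi X Y s (a * b) u = (\<Sum>v\<in>{v \<in> B X Y. psi X Y s a v \<noteq> 0}. psi X Y s a v * psi X Y v b u)"
    using entwining s unfolding entwining_def by blast
  also have "\<dots> = (\<Sum>v\<in>V. psi X Y s a v * psi X Y v b u)"
    by (rule sum_nonzero_eq_sum_superset) (use V in \<open>auto simp: psi_outside_zero[OF s]\<close>)
  finally show ?thesis .
qed

lemma psi_compat_on:
  assumes t: "t \<in> B X Z"
    and U: "finite U" "\<And>u. psi X Z t a u \<noteq> 0 \<Longrightarrow> u \<in> U"
    and RS: "finite R" "finite S" "\<And>r s. dlt X Y Z t (r, s) \<noteq> 0 \<Longrightarrow> r \<in> R \<and> s \<in> S"
  shows "(\<Sum>u\<in>U. sA (dlt X Y Z u (p, q)) (psi X Z t a u))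
       = (\<Sum>r\<in>R. \<Sum>s\<in>S. sA (dlt X Y Z t (r, s)) (psi Y Z r (psi X Y s a q) p))"
proof (cases "p \<in> B Y Z \<and> q \<in> B X Y")
  case True
  have "(\<Sum>u\<in>{u \<in> B X Z. psi X Z t a u \<noteq> 0}. sA (dlt X Y Z u (p, q)) (psi X Z t a u))
      = (\<Sum>rs\<in>{rs \<in> B Y Z \<times> B X Y. dlt X Y Z t rs \<noteq> 0}.
           psi Y Z (fst rs) (sA (dlt X Y Z t rs) (psi X Y (snd rs) a q)) p)"
    using entwining t True unfolding entwining_def by blast
  also have "\<dots> = (\<Sum>rs\<in>{rs \<in> B Y Z \<times> B X Y. dlt X Y Z t rs \<noteq> 0}.
           sA (dlt X Y Z t rs) (psi Y Z (fst rs) (psi X Y (snd rs) a q) p))"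
    by (rule sum.cong) (auto simp: psi_sA)
  also have "\<dots> = (\<Sum>rs\<in>R \<times> S. sA (dlt X Y Z t rs) (psi Y Z (fst rs) (psi X Y (snd rs) a q) p))"
  proof (rule sum_nonzero_eq_sum_superset)
    fix rs assume "rs \<in> R \<times> S" "rs \<notin> B Y Z \<times> B X Y \<or> dlt X Y Z t rs = 0"
    then have "dlt X Y Z t rs = 0" using dlt_outside_zero[OF t] by blast
    then show "sA (dlt X Y Z t rs) (psi Y Z (fst rs) (psi X Y (snd rs) a q) p) = 0" by simp
  qed (use RS in auto)
  finally have "(\<Sum>u\<in>{u \<in> B X Z. psi X Z t a u \<noteq> 0}. sA (dlt X Y Z u (p, q)) (psi X Z t a u))
      = (\<Sum>r\<in>R. \<Sum>s\<in>S. sA (dlt X Y Z t (r, s)) (psi Y Z r (psi X Y s a q) p))"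
    by (simp add: sum.cartesian_product case_prod_beta)
  moreover have "(\<Sum>u\<in>{u \<in> B X Z. psi X Z t a u \<noteq> 0}. sA (dlt X Y Z u (p, q)) (psi X Z t a u))
      = (\<Sum>u\<in>U. sA (dlt X Y Z u (p, q)) (psi X Z t a u))"
    by (rule sum_nonzero_eq_sum_superset) (use U in \<open>auto simp: psi_outside_zero[OF t]\<close>)
  ultimately show ?thesis by simp
next
  case False
  have lhs_zero: "sA (dlt X Y Z u (p, q)) (psi X Z t a u) = 0" for u
  proof (cases "psi X Z t a u = 0")
    case False
    then have "u \<in> B X Z" using psi_support[OF t] by blast
    then show ?thesis using \<open>\<not> (p \<in> B Y Z \<and> q \<in> B X Y)\<close> by (simp add: dlt_outside_zero)
  qed simp
  have rhs_zero: "sA (dlt X Y Z t (r, s)) (psi Y Z r (psi X Y s a q) p) = 0" for r s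
  proof (cases "dlt X Y Z t (r, s) = 0")
    case False
    then have "r \<in> B Y Z" "s \<in> B X Y" using dlt_support[OF t] by auto
    then show ?thesis using \<open>\<not> (p \<in> B Y Z \<and> q \<in> B X Y)\<close>
      by (auto simp: psi_outside_zero)
  qed simp
  show ?thesis by (simp only: lhs_zero rhs_zero sum.neutral_const)
qed

(* Functions on the basis B X W stand for linear maps C(X,W) -> A.  With psi(c (x) a) = a_psi (x) c^psi
   and delta(c) = c_(1) (x) c_(2), the action is (a f)(c) = a_psi f(c^psi) and the contraaction is
   pi(phi)(c) = phi(c_(2))(c_(1)). *)
definition free_car :: "'x \<Rightarrow> 'x \<Rightarrow> ('b \<Rightarrow> 'a) set" where
  "free_car W X = {f. \<forall>s. s \<notin> B X W \<longrightarrow> f s = 0}"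

definition free_act :: "'x \<Rightarrow> 'x \<Rightarrow> 'a \<Rightarrow> ('b \<Rightarrow> 'a) \<Rightarrow> 'b \<Rightarrow> 'a" where
  "free_act W X a f = (\<lambda>t. if t \<in> B X W
     then \<Sum>u\<in>{u \<in> B X W. psi X W t a u \<noteq> 0}. psi X W t a u * f u else 0)"

definition free_pi :: "'x \<Rightarrow> 'x \<Rightarrow> 'x \<Rightarrow> ('b \<Rightarrow> 'b \<Rightarrow> 'a) \<Rightarrow> 'b \<Rightarrow> 'a" where
  "free_pi W X Z \<phi> = (\<lambda>t. if t \<in> B X W
     then \<Sum>rs\<in>{rs \<in> B Z W \<times> B X Z. dlt X Z W t rs \<noteq> 0}. sA (dlt X Z W t rs) (\<phi> (snd rs) (fst rs))
     else 0)"

definition free_ctr :: "'x \<Rightarrow> ('x, 'b \<Rightarrow> 'a, 'a, 'b) ectr" where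
  "free_ctr W = \<lparr>ecar = free_car W, eact = free_act W, epi = free_pi W\<rparr>"

lemma free_ctr_simps [simp]:
  "ecar (free_ctr W) = free_car W" "eact (free_ctr W) = free_act W" "epi (free_ctr W) = free_pi W"
  by (simp_all add: free_ctr_def)

lemma free_act_in_car: "free_act W X a f \<in> free_car W X"
  by (simp add: free_act_def free_car_def)

lemma free_pi_in_car: "free_pi W X Z \<phi> \<in> free_car W X"
  by (simp add: free_pi_def free_car_def)

lemma free_act_eq_sum:
  assumes t: "t \<in> B X W" and T: "finite T" "\<And>u. psi X W t a u \<noteq> 0 \<Longrightarrow> u \<in> T"
  shows "free_act W X a f t = (\<Sum>u\<in>T. psi X W t a u * f u)"
proof -
  have "(\<Sum>u\<in>{u \<in> B X W. psi X W t a u \<noteq> 0}. psi X W t a u * f u) = (\<Sum>u\<in>T. psi X W t a u * f u)"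
    by (rule sum_nonzero_eq_sum_superset) (use T in \<open>auto simp: psi_outside_zero[OF t]\<close>)
  then show ?thesis using t by (simp add: free_act_def)
qed

lemma free_pi_eq_sum:
  assumes t: "t \<in> B X W"
    and RS: "finite R" "finite S" "\<And>r s. dlt X Z W t (r, s) \<noteq> 0 \<Longrightarrow> r \<in> R \<and> s \<in> S"
  shows "free_pi W X Z \<phi> t = (\<Sum>r\<in>R. \<Sum>s\<in>S. sA (dlt X Z W t (r, s)) (\<phi> s r))"
proof -
  have "(\<Sum>rs\<in>{rs \<in> B Z W \<times> B X Z. dlt X Z W t rs \<noteq> 0}. sA (dlt X Z W t rs) (\<phi> (snd rs) (fst rs)))
      = (\<Sum>rs\<in>R \<times> S. sA (dlt X Z W t rs) (\<phi> (snd rs) (fst rs)))"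
  proof (rule sum_nonzero_eq_sum_superset)
    fix rs assume "rs \<in> R \<times> S" "rs \<notin> B Z W \<times> B X Z \<or> dlt X Z W t rs = 0"
    then have "dlt X Z W t rs = 0" using dlt_outside_zero[OF t] by blast
    then show "sA (dlt X Z W t rs) (\<phi> (snd rs) (fst rs)) = 0" by simp
  qed (use RS in auto)
  then show ?thesis
    using t by (simp add: free_pi_def sum.cartesian_product case_prod_beta)
qed

lemma kact_free_ctr:
  assumes f: "f \<in> free_car W X"
  shows "kact sA (free_ctr W) X k f = (\<lambda>t. sA k (f t))"
proof
  fix t
  show "kact sA (free_ctr W) X k f t = sA k (f t)"
  proof (cases "t \<in> B X W")
    case True
    have "kact sA (free_ctr W) X k f t = (\<Sum>u\<in>{t}. psi X W t (sA k 1) u * f u)"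
      unfolding kact_def free_ctr_simps
      by (rule free_act_eq_sum[OF True]) (auto simp: psi_sA[OF True] psi_one[OF True] split: if_split_asm)
    then show ?thesis by (simp add: psi_sA[OF True] psi_one[OF True] sA_one_mult)
  next
    case False
    then show ?thesis using f by (simp add: kact_def free_act_def free_car_def)
  qed
qed

lemma free_act_one: "f \<in> free_car W X \<Longrightarrow> free_act W X 1 f = f"
  using kact_free_ctr[of f W X 1] by (simp add: kact_def sA_one)

lemma free_act_add_left: "free_act W X (a + b) f = free_act W X a f + free_act W X b f"
proof
  fix t
  show "free_act W X (a + b) f t = (free_act W X a f + free_act W X b f) t"
  proof (cases "t \<in> B X W")
    case True
    define T where "T = {u. psi X W t a u \<noteq> 0} \<union> {u. psi X W t b u \<noteq> 0}"
    have T: "finite T" unfolding T_def using psi_finite_support[OF True] by simp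
    have "free_act W X (a + b) f t = (\<Sum>u\<in>T. psi X W t (a + b) u * f u)"
      by (rule free_act_eq_sum[OF True T]) (auto simp: T_def psi_add[OF True])
    moreover have "free_act W X a f t = (\<Sum>u\<in>T. psi X W t a u * f u)"
      by (rule free_act_eq_sum[OF True T]) (auto simp: T_def)
    moreover have "free_act W X b f t = (\<Sum>u\<in>T. psi X W t b u * f u)"
      by (rule free_act_eq_sum[OF True T]) (auto simp: T_def)
    ultimately show ?thesis by (simp add: psi_add[OF True] distrib_right sum.distrib)
  qed (simp add: free_act_def)
qed

lemma free_act_add_right: "free_act W X a (f + g) = free_act W X a f + free_act W X a g"
  by (auto simp: free_act_def distrib_left sum.distrib fun_eq_iff)

lemma free_act_mult: "free_act W X (a * b) f = free_act W X a (free_act W X b f)"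
proof
  fix t
  show "free_act W X (a * b) f t = free_act W X a (free_act W X b f) t"
  proof (cases "t \<in> B X W")
    case True
    define V where "V = {v. psi X W t a v \<noteq> 0}"
    have V: "finite V" "V \<subseteq> B X W" unfolding V_def using psi_finite_support[OF True] psi_support[OF True] by auto
    define U where "U = {u. psi X W t (a * b) u \<noteq> 0} \<union> (\<Union>v\<in>V. {u. psi X W v b u \<noteq> 0})"
    have U: "finite U" unfolding U_def using psi_finite_support[OF True] psi_finite_support V by auto
    have "free_act W X (a * b) f t = (\<Sum>u\<in>U. psi X W t (a * b) u * f u)"
      by (rule free_act_eq_sum[OF True U]) (auto simp: U_def)
    also have "\<dots> = (\<Sum>u\<in>U. \<Sum>v\<in>V. psi X W t a v * psi X W v b u * f u)"
      by (simp add: psi_mult_on[OF True V(1)] V_def sum_distrib_right)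
    also have "\<dots> = (\<Sum>v\<in>V. psi X W t a v * (\<Sum>u\<in>U. psi X W v b u * f u))"
      by (simp add: sum.swap[of _ U] sum_distrib_left mult.assoc)
    also have "\<dots> = (\<Sum>v\<in>V. psi X W t a v * free_act W X b f v)"
    proof (rule sum.cong[OF refl])
      fix v assume v: "v \<in> V"
      have "free_act W X b f v = (\<Sum>u\<in>U. psi X W v b u * f u)"
        by (rule free_act_eq_sum[OF _ U]) (use v V in \<open>auto simp: U_def\<close>)
      then show "psi X W t a v * (\<Sum>u\<in>U. psi X W v b u * f u) = psi X W t a v * free_act W X b f v"
        by simp
    qed
    also have "\<dots> = free_act W X a (free_act W X b f) t"
      by (rule free_act_eq_sum[OF True V(1), symmetric]) (auto simp: V_def)
    finally show ?thesis .
  qed (simp add: free_act_def)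
qed

lemma free_pi_add: "free_pi W X Y (\<lambda>s\<in>B X Y. \<phi> s + \<phi>' s) = free_pi W X Y \<phi> + free_pi W X Y \<phi>'"
  unfolding free_pi_def fun_eq_iff
  by (auto simp: sA_add_right[symmetric] sum.distrib[symmetric] intro!: sum.cong)

lemma free_pi_kact:
  assumes \<phi>: "\<phi> \<in> B X Y \<rightarrow>\<^sub>E free_car W Y"
  shows "free_pi W X Y (\<lambda>s\<in>B X Y. kact sA (free_ctr W) Y k (\<phi> s))
       = kact sA (free_ctr W) X k (free_pi W X Y \<phi>)"
proof -
  have "kact sA (free_ctr W) Y k (\<phi> s) = (\<lambda>r. sA k (\<phi> s r))" if "s \<in> B X Y" for s
    using \<phi> that by (intro kact_free_ctr) auto
  then show ?thesis
    unfolding kact_free_ctr[OF free_pi_in_car] unfolding free_pi_def fun_eq_iff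
    by (auto simp: sA_sum_right sA_left_commute intro!: sum.cong)
qed

lemma free_pi_counit:
  assumes f: "f \<in> free_car W X"
  shows "free_pi W X X (\<lambda>s\<in>B X X. kact sA (free_ctr W) X (eps X s) f) = f"
proof
  fix t
  show "free_pi W X X (\<lambda>s\<in>B X X. kact sA (free_ctr W) X (eps X s) f) t = f t"
  proof (cases "t \<in> B X W")
    case True
    define D where "D = {rs. dlt X X W t rs \<noteq> 0}"
    have D: "finite D" "D \<subseteq> B X W \<times> B X X"
      unfolding D_def using dlt_finite_support[OF True] dlt_support[OF True] by auto
    define R where "R = insert t (Domain D)"
    have R: "finite R" "R \<subseteq> B X W" unfolding R_def using D True by (auto intro: finite_Domain)
    have S: "finite (Range D)" "\<And>r s. dlt X X W t (r, s) \<noteq> 0 \<Longrightarrow> s \<in> Range D"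
      using D by (auto simp: D_def intro: finite_Range)
    have "free_pi W X X (\<lambda>s\<in>B X X. kact sA (free_ctr W) X (eps X s) f) t
        = (\<Sum>r\<in>R. \<Sum>s\<in>Range D. sA (dlt X X W t (r, s)) ((\<lambda>s\<in>B X X. kact sA (free_ctr W) X (eps X s) f) s r))"
      by (rule free_pi_eq_sum[OF True R(1) S(1)]) (auto simp: R_def D_def)
    also have "\<dots> = (\<Sum>r\<in>R. sA (\<Sum>s\<in>Range D. eps X s * dlt X X W t (r, s)) (f r))"
      using D by (auto simp: kact_free_ctr[OF f] sA_sA sA_sum_left mult.commute intro!: sum.cong)
    also have "\<dots> = (\<Sum>r\<in>R. if r = t then f r else 0)"
      using R by (intro sum.cong refl) (auto simp: counit_snd_on[OF True _ S] sA_one)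
    also have "\<dots> = f t" using R by (simp add: R_def)
    finally show ?thesis .
  qed (use f in \<open>simp add: free_pi_def free_car_def\<close>)
qed

lemma free_pi_comult_eq_sum:
  assumes t: "t \<in> B X W" and \<Phi>: "\<Phi> \<in> (B Y Z \<times> B X Y) \<rightarrow>\<^sub>E free_car W Z"
    and RS: "finite R" "finite S" "\<And>r s. dlt X Z W t (r, s) \<noteq> 0 \<Longrightarrow> r \<in> R \<and> s \<in> S"
    and PQ: "finite P" "finite Q"
      "\<And>s p q. s \<in> S \<Longrightarrow> s \<in> B X Z \<Longrightarrow> dlt X Y Z s (p, q) \<noteq> 0 \<Longrightarrow> p \<in> P \<and> q \<in> Q"
  shows "free_pi W X Z (\<lambda>s\<in>B X Z. \<Sum>pq\<in>{pq \<in> B Y Z \<times> B X Y. dlt X Y Z s pq \<noteq> 0}.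
             kact sA (free_ctr W) Z (dlt X Y Z s pq) (\<Phi> pq)) t
       = (\<Sum>r\<in>R. \<Sum>p\<in>P. \<Sum>q\<in>Q. sA (\<Sum>s\<in>S. dlt X Z W t (r, s) * dlt X Y Z s (p, q)) (\<Phi> (p, q) r))"
    (is "free_pi W X Z ?\<psi> t = _")
proof -
  have "free_pi W X Z ?\<psi> t = (\<Sum>r\<in>R. \<Sum>s\<in>S. sA (dlt X Z W t (r, s)) (?\<psi> s r))"
    by (rule free_pi_eq_sum[OF t RS])
  also have "\<dots> = (\<Sum>r\<in>R. \<Sum>s\<in>S. \<Sum>p\<in>P. \<Sum>q\<in>Q.
      sA (dlt X Z W t (r, s) * dlt X Y Z s (p, q)) (\<Phi> (p, q) r))"
  proof (intro sum.cong refl)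
    fix r s assume s: "s \<in> S"
    show "sA (dlt X Z W t (r, s)) (?\<psi> s r)
        = (\<Sum>p\<in>P. \<Sum>q\<in>Q. sA (dlt X Z W t (r, s) * dlt X Y Z s (p, q)) (\<Phi> (p, q) r))"
    proof (cases "s \<in> B X Z")
      case True
      have "\<Phi> pq \<in> free_car W Z" if "pq \<in> B Y Z \<times> B X Y" for pq
        using \<Phi> that by blast
      then have "?\<psi> s r = (\<Sum>pq\<in>{pq \<in> B Y Z \<times> B X Y. dlt X Y Z s pq \<noteq> 0}. sA (dlt X Y Z s pq) (\<Phi> pq r))"
        using True by (auto simp: sum_fun_apply kact_free_ctr intro!: sum.cong)
      also have "\<dots> = (\<Sum>pq\<in>P \<times> Q. sA (dlt X Y Z s pq) (\<Phi> pq r))"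
      proof (rule sum_nonzero_eq_sum_superset)
        fix pq assume "pq \<in> P \<times> Q" "pq \<notin> B Y Z \<times> B X Y \<or> dlt X Y Z s pq = 0"
        then have "dlt X Y Z s pq = 0" using dlt_outside_zero[OF True] by blast
        then show "sA (dlt X Y Z s pq) (\<Phi> pq r) = 0" by simp
      qed (use PQ s True in auto)
      finally show ?thesis
        by (simp add: sum.cartesian_product case_prod_beta sA_sum_right sA_sA)
    next
      case False
      then have "dlt X Z W t (r, s) = 0" using dlt_outside_zero[OF t] by blast
      then show ?thesis by simp
    qed
  qed
  also have "\<dots> = (\<Sum>r\<in>R. \<Sum>p\<in>P. \<Sum>q\<in>Q. \<Sum>s\<in>S.
      sA (dlt X Z W t (r, s) * dlt X Y Z s (p, q)) (\<Phi> (p, q) r))"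
    by (rule sum.cong[OF refl], subst sum.swap, rule sum.cong[OF refl], rule sum.swap)
  finally show ?thesis by (simp add: sA_sum_left)
qed

lemma free_pi_free_pi_eq_sum:
  assumes t: "t \<in> B X W"
    and R'Q: "finite R'" "finite Q" "\<And>r' q. dlt X Y W t (r', q) \<noteq> 0 \<Longrightarrow> r' \<in> R' \<and> q \<in> Q"
    and RP: "finite R" "finite P"
      "\<And>r' r p. r' \<in> R' \<Longrightarrow> r' \<in> B Y W \<Longrightarrow> dlt Y Z W r' (r, p) \<noteq> 0 \<Longrightarrow> r \<in> R \<and> p \<in> P"
  shows "free_pi W X Y (\<lambda>q\<in>B X Y. free_pi W Y Z (\<lambda>p\<in>B Y Z. \<Phi> (p, q))) t
       = (\<Sum>r\<in>R. \<Sum>p\<in>P. \<Sum>q\<in>Q. sA (\<Sum>r'\<in>R'. dlt X Y W t (r', q) * dlt Y Z W r' (r, p)) (\<Phi> (p, q) r))"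
proof -
  have "free_pi W X Y (\<lambda>q\<in>B X Y. free_pi W Y Z (\<lambda>p\<in>B Y Z. \<Phi> (p, q))) t
      = (\<Sum>r'\<in>R'. \<Sum>q\<in>Q. sA (dlt X Y W t (r', q))
          ((\<lambda>q\<in>B X Y. free_pi W Y Z (\<lambda>p\<in>B Y Z. \<Phi> (p, q))) q r'))"
    by (rule free_pi_eq_sum[OF t R'Q])
  also have "\<dots> = (\<Sum>r'\<in>R'. \<Sum>q\<in>Q. \<Sum>r\<in>R. \<Sum>p\<in>P.
      sA (dlt X Y W t (r', q) * dlt Y Z W r' (r, p)) (\<Phi> (p, q) r))"
  proof (intro sum.cong refl)
    fix r' q assume r': "r' \<in> R'"
    show "sA (dlt X Y W t (r', q)) ((\<lambda>q\<in>B X Y. free_pi W Y Z (\<lambda>p\<in>B Y Z. \<Phi> (p, q))) q r')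
        = (\<Sum>r\<in>R. \<Sum>p\<in>P. sA (dlt X Y W t (r', q) * dlt Y Z W r' (r, p)) (\<Phi> (p, q) r))"
    proof (cases "dlt X Y W t (r', q) = 0")
      case False
      then have r'B: "r' \<in> B Y W" and qB: "q \<in> B X Y" using dlt_support[OF t] by auto
      have "free_pi W Y Z (\<lambda>p\<in>B Y Z. \<Phi> (p, q)) r'
          = (\<Sum>r\<in>R. \<Sum>p\<in>P. sA (dlt Y Z W r' (r, p)) ((\<lambda>p\<in>B Y Z. \<Phi> (p, q)) p r))"
        by (rule free_pi_eq_sum[OF r'B RP(1,2)]) (use RP(3) r' r'B in blast)
      also have "\<dots> = (\<Sum>r\<in>R. \<Sum>p\<in>P. sA (dlt Y Z W r' (r, p)) (\<Phi> (p, q) r))"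
        by (intro sum.cong refl) (auto simp: dlt_outside_zero[OF r'B])
      finally show ?thesis using qB by (simp add: sA_sum_right sA_sA)
    qed simp
  qed
  also have "\<dots> = (\<Sum>r\<in>R. \<Sum>p\<in>P. \<Sum>q\<in>Q. \<Sum>r'\<in>R'.
      sA (dlt X Y W t (r', q) * dlt Y Z W r' (r, p)) (\<Phi> (p, q) r))"
    by (subst sum_swap_4) (intro sum.cong refl sum.swap)
  finally show ?thesis by (simp add: sA_sum_left)
qed

lemma free_pi_assoc:
  assumes \<Phi>: "\<Phi> \<in> (B Y Z \<times> B X Y) \<rightarrow>\<^sub>E free_car W Z"
  shows "free_pi W X Z (\<lambda>s\<in>B X Z. \<Sum>pq\<in>{pq \<in> B Y Z \<times> B X Y. dlt X Y Z s pq \<noteq> 0}.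
             kact sA (free_ctr W) Z (dlt X Y Z s pq) (\<Phi> pq))
       = free_pi W X Y (\<lambda>q\<in>B X Y. free_pi W Y Z (\<lambda>p\<in>B Y Z. \<Phi> (p, q)))"
    (is "?lhs = ?rhs")
proof
  fix t
  show "?lhs t = ?rhs t"
  proof (cases "t \<in> B X W")
    case True
    define D1 where "D1 = {rs. dlt X Z W t rs \<noteq> 0}"
    define D2 where "D2 = (\<Union>s\<in>Range D1. {pq. dlt X Y Z s pq \<noteq> 0})"
    define D3 where "D3 = {r'q. dlt X Y W t r'q \<noteq> 0}"
    define D4 where "D4 = (\<Union>r'\<in>Domain D3. {rp. dlt Y Z W r' rp \<noteq> 0})"
    define R where "R = Domain D1 \<union> Domain D4"
    define P where "P = Domain D2 \<union> Range D4"
    define Q where "Q = Range D2 \<union> Range D3"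
    have D13: "finite D1" "D1 \<subseteq> B Z W \<times> B X Z" "finite D3" "D3 \<subseteq> B Y W \<times> B X Y"
      unfolding D1_def D3_def using dlt_finite_support[OF True] dlt_support[OF True] by auto
    have "finite D2" "finite D4"
      unfolding D2_def D4_def using D13 dlt_finite_support
      by (auto intro!: finite_UN_I finite_Domain finite_Range)
    then have fin: "finite R" "finite P" "finite Q" "finite (Range D1)" "finite (Domain D3)"
      unfolding R_def P_def Q_def using D13 by (auto intro: finite_Domain finite_Range)
    have "?lhs t = (\<Sum>r\<in>R. \<Sum>p\<in>P. \<Sum>q\<in>Q.
        sA (\<Sum>s\<in>Range D1. dlt X Z W t (r, s) * dlt X Y Z s (p, q)) (\<Phi> (p, q) r))"
      by (rule free_pi_comult_eq_sum[OF True \<Phi> fin(1,4) _ fin(2,3)])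
        (auto simp: R_def P_def Q_def D1_def D2_def)
    also have "\<dots> = (\<Sum>r\<in>R. \<Sum>p\<in>P. \<Sum>q\<in>Q.
        sA (\<Sum>r'\<in>Domain D3. dlt X Y W t (r', q) * dlt Y Z W r' (r, p)) (\<Phi> (p, q) r))"
      by (intro sum.cong[OF refl] refl arg_cong2[where f = sA] coassoc_on[OF True fin(5) _ fin(4), symmetric])
        (auto simp: D1_def D3_def)
    also have "\<dots> = ?rhs t"
      by (rule free_pi_free_pi_eq_sum[OF True fin(5,3) _ fin(1,2), symmetric])
        (auto simp: R_def P_def Q_def D3_def D4_def)
    finally show ?thesis .
  qed (simp add: free_pi_def)
qed

lemma free_act_free_pi_eq_sum:
  assumes t: "t \<in> B X W"
    and V: "finite V" "\<And>v. psi X W t a v \<noteq> 0 \<Longrightarrow> v \<in> V"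
    and RQ: "finite R" "finite Q"
      "\<And>v r q. v \<in> V \<Longrightarrow> v \<in> B X W \<Longrightarrow> dlt X Y W v (r, q) \<noteq> 0 \<Longrightarrow> r \<in> R \<and> q \<in> Q"
  shows "free_act W X a (free_pi W X Y \<phi>) t
       = (\<Sum>r\<in>R. \<Sum>q\<in>Q. (\<Sum>v\<in>V. sA (dlt X Y W v (r, q)) (psi X W t a v)) * \<phi> q r)"
proof -
  have "free_act W X a (free_pi W X Y \<phi>) t = (\<Sum>v\<in>V. psi X W t a v * free_pi W X Y \<phi> v)"
    by (rule free_act_eq_sum[OF t V])
  also have "\<dots> = (\<Sum>v\<in>V. \<Sum>r\<in>R. \<Sum>q\<in>Q. sA (dlt X Y W v (r, q)) (psi X W t a v) * \<phi> q r)"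
  proof (rule sum.cong[OF refl])
    fix v assume v: "v \<in> V"
    show "psi X W t a v * free_pi W X Y \<phi> v
        = (\<Sum>r\<in>R. \<Sum>q\<in>Q. sA (dlt X Y W v (r, q)) (psi X W t a v) * \<phi> q r)"
    proof (cases "v \<in> B X W")
      case True
      have "free_pi W X Y \<phi> v = (\<Sum>r\<in>R. \<Sum>q\<in>Q. sA (dlt X Y W v (r, q)) (\<phi> q r))"
        by (rule free_pi_eq_sum[OF True RQ(1,2)]) (use RQ(3) v True in blast)
      then show ?thesis by (simp add: sum_distrib_left mult_sA_commute)
    next
      case False
      then show ?thesis by (simp add: psi_outside_zero[OF t])
    qed
  qed
  also have "\<dots> = (\<Sum>r\<in>R. \<Sum>q\<in>Q. \<Sum>v\<in>V. sA (dlt X Y W v (r, q)) (psi X W t a v) * \<phi> q r)"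
    by (subst sum.swap, rule sum.cong[OF refl], rule sum.swap)
  finally show ?thesis by (simp add: sum_distrib_right)
qed

lemma free_pi_free_act_eq_sum:
  assumes t: "t \<in> B X W"
    and R'S: "finite R'" "finite S" "\<And>r' s. dlt X Y W t (r', s) \<noteq> 0 \<Longrightarrow> r' \<in> R' \<and> s \<in> S"
    and Q: "finite Q" "\<And>s q. s \<in> S \<Longrightarrow> s \<in> B X Y \<Longrightarrow> psi X Y s a q \<noteq> 0 \<Longrightarrow> q \<in> Q"
    and R: "finite R"
      "\<And>r' s q r. r' \<in> R' \<Longrightarrow> r' \<in> B Y W \<Longrightarrow> s \<in> S \<Longrightarrow> s \<in> B X Y \<Longrightarrow> psi X Y s a q \<noteq> 0
        \<Longrightarrow> psi Y W r' (psi X Y s a q) r \<noteq> 0 \<Longrightarrow> r \<in> R"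
  shows "free_pi W X Y (\<lambda>s\<in>B X Y. \<Sum>u\<in>{u \<in> B X Y. psi X Y s a u \<noteq> 0}. free_act W Y (psi X Y s a u) (\<phi> u)) t
       = (\<Sum>r\<in>R. \<Sum>q\<in>Q. (\<Sum>r'\<in>R'. \<Sum>s\<in>S. sA (dlt X Y W t (r', s)) (psi Y W r' (psi X Y s a q) r)) * \<phi> q r)"
    (is "free_pi W X Y ?\<chi> t = _")
proof -
  have "free_pi W X Y ?\<chi> t = (\<Sum>r'\<in>R'. \<Sum>s\<in>S. sA (dlt X Y W t (r', s)) (?\<chi> s r'))"
    by (rule free_pi_eq_sum[OF t R'S])
  also have "\<dots> = (\<Sum>r'\<in>R'. \<Sum>s\<in>S. \<Sum>q\<in>Q. \<Sum>r\<in>R.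
      sA (dlt X Y W t (r', s)) (psi Y W r' (psi X Y s a q) r) * \<phi> q r)"
  proof (rule sum.cong[OF refl], rule sum.cong[OF refl])
    fix r' s assume r': "r' \<in> R'" and s: "s \<in> S"
    show "sA (dlt X Y W t (r', s)) (?\<chi> s r') = (\<Sum>q\<in>Q. \<Sum>r\<in>R.
        sA (dlt X Y W t (r', s)) (psi Y W r' (psi X Y s a q) r) * \<phi> q r)"
    proof (cases "dlt X Y W t (r', s) = 0")
      case False
      then have r'B: "r' \<in> B Y W" and sB: "s \<in> B X Y" using dlt_support[OF t] by auto
      have "?\<chi> s r' = (\<Sum>u\<in>{u \<in> B X Y. psi X Y s a u \<noteq> 0}. free_act W Y (psi X Y s a u) (\<phi> u) r')"
        using sB by (simp add: sum_fun_apply)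
      also have "\<dots> = (\<Sum>u\<in>{u \<in> B X Y. psi X Y s a u \<noteq> 0}. \<Sum>r\<in>R. psi Y W r' (psi X Y s a u) r * \<phi> u r)"
        by (intro sum.cong[OF refl] free_act_eq_sum[OF r'B R(1)]) (use R(2) r' r'B s sB in blast)
      also have "\<dots> = (\<Sum>q\<in>Q. \<Sum>r\<in>R. psi Y W r' (psi X Y s a q) r * \<phi> q r)"
        by (rule sum_nonzero_eq_sum_superset) (use Q s sB in \<open>auto simp: psi_outside_zero[OF sB] r'B\<close>)
      finally show ?thesis by (simp add: sA_sum_right sA_mult_left)
    qed simp
  qed
  also have "\<dots> = (\<Sum>r\<in>R. \<Sum>q\<in>Q. \<Sum>r'\<in>R'. \<Sum>s\<in>S.
      sA (dlt X Y W t (r', s)) (psi Y W r' (psi X Y s a q) r) * \<phi> q r)"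
    by (subst sum_swap_4) (rule sum.swap)
  finally show ?thesis by (simp add: sum_distrib_right)
qed

lemma free_act_free_pi:
  "free_act W X a (free_pi W X Y \<phi>)
     = free_pi W X Y (\<lambda>s\<in>B X Y. \<Sum>u\<in>{u \<in> B X Y. psi X Y s a u \<noteq> 0}. free_act W Y (psi X Y s a u) (\<phi> u))"
    (is "?lhs = ?rhs")
proof
  fix t
  show "?lhs t = ?rhs t"
  proof (cases "t \<in> B X W")
    case True
    define V where "V = {v. psi X W t a v \<noteq> 0}"
    define E where "E = {r's. dlt X Y W t r's \<noteq> 0}"
    define R where "R = (\<Union>v\<in>V. Domain {rq. dlt X Y W v rq \<noteq> 0})
      \<union> (\<Union>r'\<in>Domain E. \<Union>s\<in>Range E. \<Union>q\<in>{q. psi X Y s a q \<noteq> 0}. {r. psi Y W r' (psi X Y s a q) r \<noteq> 0})"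
    define Q where "Q = (\<Union>v\<in>V. Range {rq. dlt X Y W v rq \<noteq> 0}) \<union> (\<Union>s\<in>Range E. {q. psi X Y s a q \<noteq> 0})"
    have VE: "finite V" "V \<subseteq> B X W" "finite E" "E \<subseteq> B Y W \<times> B X Y"
      unfolding V_def E_def
      using psi_finite_support[OF True] psi_support[OF True] dlt_finite_support[OF True] dlt_support[OF True]
      by auto
    have fin: "finite R" "finite Q" "finite (Domain E)" "finite (Range E)"
      unfolding R_def Q_def using VE psi_support
      by (auto intro!: finite_UN_I finite_Domain finite_Range dlt_finite_support psi_finite_support)
    have "?lhs t = (\<Sum>r\<in>R. \<Sum>q\<in>Q. (\<Sum>v\<in>V. sA (dlt X Y W v (r, q)) (psi X W t a v)) * \<phi> q r)"
      by (rule free_act_free_pi_eq_sum[OF True VE(1) _ fin(1,2)]) (auto simp: V_def R_def Q_def)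
    also have "\<dots> = (\<Sum>r\<in>R. \<Sum>q\<in>Q.
        (\<Sum>r'\<in>Domain E. \<Sum>s\<in>Range E. sA (dlt X Y W t (r', s)) (psi Y W r' (psi X Y s a q) r)) * \<phi> q r)"
      by (intro sum.cong[OF refl] refl arg_cong2[where f = "(*)"] psi_compat_on[OF True VE(1) _ fin(3,4)])
        (auto simp: V_def E_def)
    also have "\<dots> = ?rhs t"
      by (rule free_pi_free_act_eq_sum[OF True fin(3,4) _ fin(2) _ fin(1), symmetric])
        (unfold E_def Q_def R_def, blast+)
    finally show ?thesis .
  qed (simp add: free_act_def free_pi_def)
qed

lemma free_car_subgroup:
  "0 \<in> free_car W X \<and> (\<forall>f\<in>free_car W X. \<forall>g\<in>free_car W X. f + g \<in> free_car W X)
    \<and> (\<forall>f\<in>free_car W X. - f \<in> free_car W X)"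
  by (simp add: free_car_def)

lemma entw_ctr_free_ctr: "entw_ctr B dlt eps sA psi (free_ctr W)"
  unfolding entw_ctr_def free_ctr_simps
  by (auto simp: free_car_subgroup free_act_in_car free_pi_in_car free_act_one free_act_mult
      free_act_add_left free_act_add_right free_pi_add free_pi_kact free_pi_assoc free_pi_counit
      free_act_free_pi)

definition free_unit :: "'x \<Rightarrow> 'b \<Rightarrow> 'a" where
  "free_unit W = (\<lambda>s. if s \<in> B W W then sA (eps W s) 1 else 0)"

lemma free_unit_in_car: "free_unit W \<in> free_car W W"
  by (simp add: free_unit_def free_car_def)

definition eval_hom :: "('x, 'm::ab_group_add, 'a, 'b) ectr \<Rightarrow> 'x \<Rightarrow> 'm \<Rightarrow> 'x \<Rightarrow> ('b \<Rightarrow> 'a) \<Rightarrow> 'm" where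
  "eval_hom M W m X f = epi M X W (\<lambda>s\<in>B X W. eact M W (f s) m)"

context
  fixes M :: "('x, 'm::ab_group_add, 'a, 'b) ectr" and W m
  assumes M: "entw_ctr B dlt eps sA psi M" and m: "m \<in> ecar M W"
begin

lemma eval_hom_in_car: "eval_hom M W m X f \<in> ecar M X"
  unfolding eval_hom_def using M m by (intro entw_ctr_pi_closed) (auto intro: entw_ctr_act_closed)

lemma eval_hom_add: "eval_hom M W m X (f + g) = eval_hom M W m X f + eval_hom M W m X g"
proof -
  have "(\<lambda>s\<in>B X W. eact M W ((f + g) s) m)
      = (\<lambda>s\<in>B X W. (\<lambda>s\<in>B X W. eact M W (f s) m) s + (\<lambda>s\<in>B X W. eact M W (g s) m) s)"
    using M m by (auto simp: entw_ctr_act_add_left)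
  moreover have "epi M X W (\<lambda>s\<in>B X W. (\<lambda>s\<in>B X W. eact M W (f s) m) s + (\<lambda>s\<in>B X W. eact M W (g s) m) s)
      = eval_hom M W m X f + eval_hom M W m X g"
    unfolding eval_hom_def using m by (intro entw_ctr_pi_add[OF M]) (auto intro: entw_ctr_act_closed[OF M])
  ultimately show ?thesis unfolding eval_hom_def by simp
qed

lemma eval_hom_act: "eval_hom M W m X (free_act W X a f) = eact M X a (eval_hom M W m X f)"
proof -
  have "eact M X a (eval_hom M W m X f) = epi M X W (\<lambda>s\<in>B X W. \<Sum>u\<in>{u \<in> B X W. psi X W s a u \<noteq> 0}.
          eact M W (psi X W s a u) ((\<lambda>s\<in>B X W. eact M W (f s) m) u))"
    unfolding eval_hom_def using M m by (intro entw_ctr_act_pi) (auto intro: entw_ctr_act_closed)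
  also have "\<dots> = eval_hom M W m X (free_act W X a f)"
    unfolding eval_hom_def using M m
    by (auto simp: free_act_def entw_ctr_act_sum entw_ctr_act_mult intro!: arg_cong[where f = "epi M X W"] sum.cong)
  finally show ?thesis by simp
qed

lemma eval_hom_pi:
  assumes \<phi>: "\<phi> \<in> B X Z \<rightarrow>\<^sub>E free_car W Z"
  shows "eval_hom M W m X (free_pi W X Z \<phi>) = epi M X Z (\<lambda>s\<in>B X Z. eval_hom M W m Z (\<phi> s))"
proof -
  define \<Phi> where "\<Phi> = (\<lambda>rs\<in>B Z W \<times> B X Z. eact M W (\<phi> (snd rs) (fst rs)) m)"
  have \<Phi>_in: "\<Phi> \<in> (B Z W \<times> B X Z) \<rightarrow>\<^sub>E ecar M W"
    unfolding \<Phi>_def using M m by (auto intro: entw_ctr_act_closed)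
  have "eval_hom M W m X (free_pi W X Z \<phi>)
      = epi M X W (\<lambda>s\<in>B X W. \<Sum>rs\<in>{rs \<in> B Z W \<times> B X Z. dlt X Z W s rs \<noteq> 0}.
          kact sA M W (dlt X Z W s rs) (\<Phi> rs))"
    unfolding eval_hom_def using M m
    by (auto simp: free_pi_def \<Phi>_def entw_ctr_act_sum entw_ctr_act_sA intro!: arg_cong[where f = "epi M X W"] sum.cong)
  also have "\<dots> = epi M X Z (\<lambda>q\<in>B X Z. epi M Z W (\<lambda>p\<in>B Z W. \<Phi> (p, q)))"
    by (rule entw_ctr_pi_assoc[OF M \<Phi>_in])
  also have "\<dots> = epi M X Z (\<lambda>s\<in>B X Z. eval_hom M W m Z (\<phi> s))"
    unfolding eval_hom_def \<Phi>_def
    by (intro arg_cong[where f = "epi M X Z"] restrict_ext arg_cong[where f = "epi M Z W"]) auto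
  finally show ?thesis .
qed

lemma ectr_hom_eval_hom: "ectr_hom B (free_ctr W) M (eval_hom M W m)"
  unfolding ectr_hom_def free_ctr_simps
  using eval_hom_in_car eval_hom_add eval_hom_act eval_hom_pi by blast

lemma eval_hom_free_unit: "eval_hom M W m W (free_unit W) = m"
  unfolding eval_hom_def free_unit_def
  using entw_ctr_pi_counit[OF M m] by (simp add: kact_def cong: restrict_cong)

end

end

theorem theorem3p10:
  fixes B :: "'x \<Rightarrow> 'x \<Rightarrow> 'b set"
    and dlt :: "'x \<Rightarrow> 'x \<Rightarrow> 'x \<Rightarrow> 'b \<Rightarrow> 'b \<times> 'b \<Rightarrow> 'k::field"
    and eps :: "'x \<Rightarrow> 'b \<Rightarrow> 'k"
    and sA :: "'k \<Rightarrow> 'a::ring_1 \<Rightarrow> 'a"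
    and psi :: "'x \<Rightarrow> 'x \<Rightarrow> 'b \<Rightarrow> 'a \<Rightarrow> 'b \<Rightarrow> 'a"
  assumes "k_algebra sA"
    and "coalgebra_so B dlt eps"
    and "entwining B dlt eps sA psi"
  shows "\<exists>Gs :: ('x, 'b \<Rightarrow> 'a, 'a, 'b) ectr set.
           (\<forall>G\<in>Gs. entw_ctr B dlt eps sA psi G)
         \<and> (\<forall>(M :: ('x, 'm::ab_group_add, 'a, 'b) ectr) (N :: ('x, 'n::ab_group_add, 'a, 'b) ectr)
               (F :: 'x \<Rightarrow> 'm \<Rightarrow> 'n) F'.
              entw_ctr B dlt eps sA psi M \<longrightarrow> entw_ctr B dlt eps sA psi N \<longrightarrow>
              ectr_hom B M N F \<longrightarrow> ectr_hom B M N F' \<longrightarrow> \<not> hom_eq M F F' \<longrightarrow>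
              (\<exists>G\<in>Gs. \<exists>H :: 'x \<Rightarrow> ('b \<Rightarrow> 'a) \<Rightarrow> 'm.
                  ectr_hom B G M H
                \<and> \<not> hom_eq G (\<lambda>X. F X \<circ> H X) (\<lambda>X. F' X \<circ> H X)))"
proof -
  interpret entwining_structure B dlt eps sA psi
    using assms by unfold_locales
  show ?thesis
  proof (intro exI[of _ "range free_ctr"] conjI ballI allI impI)
    fix G
    assume "G \<in> range free_ctr"
    then show "entw_ctr B dlt eps sA psi G" using entw_ctr_free_ctr by auto
  next
    fix M :: "('x, 'm::ab_group_add, 'a, 'b) ectr" and N :: "('x, 'n::ab_group_add, 'a, 'b) ectr"
      and F :: "'x \<Rightarrow> 'm \<Rightarrow> 'n" and F'
    assume M: "entw_ctr B dlt eps sA psi M" and "\<not> hom_eq M F F'"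
    then obtain W m where m: "m \<in> ecar M W" and "F W m \<noteq> F' W m"
      unfolding hom_eq_def by blast
    then have "\<not> hom_eq (free_ctr W) (\<lambda>X. F X \<circ> eval_hom M W m X) (\<lambda>X. F' X \<circ> eval_hom M W m X)"
      using free_unit_in_car eval_hom_free_unit[OF M m] unfolding hom_eq_def by force
    then show "\<exists>G\<in>range free_ctr. \<exists>H :: 'x \<Rightarrow> ('b \<Rightarrow> 'a) \<Rightarrow> 'm.
        ectr_hom B G M H \<and> \<not> hom_eq G (\<lambda>X. F X \<circ> H X) (\<lambda>X. F' X \<circ> H X)"
      using ectr_hom_eval_hom[OF M m] by blast
  qed
qed

end
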